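(* Let $n\ge 2$ and let $x\in\mathbb{C}^{n\times n}$ be generic (in the sense defined in the context). Fix $1\le m\le n-1$, let $\Lambda_m=\operatorname{diag}(\mu^{(m)}_1,\ldots,\mu^{(m)}_m)$ be a diagonal matrix whose diagonal entries are the eigenvalues of $x_m$ in some fixed order, let $g_m\in\mathrm{GL}(m)$ be the unique matrix with $x_m=g_m\Lambda_m g_m^{-1}$ whose last row consists entirely of ones, and define $b_m,c_m\in\mathbb{C}^m$ and $\delta_{m+1}\in\mathbb{C}$ by \[ \begin{pmatrix} g_m^{-1}&0\\0&1\end{pmatrix} x_{m+1}\begin{pmatrix} g_m&0\\0&1\end{pmatrix}=\begin{pmatrix}\Lambda_m & c_m\\ b_m^{T} & \delta_{m+1}\end{pmatrix}. \] Let $P_k(\lambda)=\det(\lambda I_k-x_k)$. Then \[ \operatorname{diag}(b_m)\operatorname{diag}(c_m)=-P_{m+1}(\Lambda_m)\bigl(P_m'(\Lambda_m)\bigr)^{-1}. \] In particular $\operatorname{diag}(b_m)\operatorname{diag}(c_m)$ is invertible.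
   Context: For a square matrix $x$, $x_k$ denotes its leading principal $k\times k$ submatrix and $E(x_k)$ the multiset of its eigenvalues. A matrix $x\in\mathbb{C}^{n\times n}$ is called generic if (G1) for every $1\le k\le n$ the eigenvalues of $x_k$ are distinct, and (G2) for every $1\le k\le n-1$, $E(x_k)\cap E(x_{k+1})=\varnothing$. Under these conditions $x_m$ is diagonalizable and every eigenvector of $x_m$ has nonzero last entry, so the normalized $g_m$ (last row all ones) exists and is unique. For $v\in\mathbb{C}^m$, $\operatorname{diag}(v)$ is the diagonal matrix with diagonal $v$; for a polynomial $P$ and diagonal $\Lambda_m$, $P(\Lambda_m)$ is the diagonal matrix with entries $P(\mu^{(m)}_i)$. *)

theory Defs
  imports "Jordan_Normal_Form.Char_Poly"
begin

definition lead_sub :: "'a mat \<Rightarrow> nat \<Rightarrow> 'a mat" where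
  "lead_sub x k = Matrix.mat k k (\<lambda>(i,j). x $$ (i,j))"

text \<open>Genericity (G1) and (G2). The multiset E(x_k) of eigenvalues is the multiset of roots
  of the characteristic polynomial; (G1) says every root has multiplicity at most one.\<close>
definition generic :: "nat \<Rightarrow> complex mat \<Rightarrow> bool" where
  "generic n x \<longleftrightarrow> x \<in> carrier_mat n n \<and>
     (\<forall>k\<in>{1..n}. \<forall>t. order t (char_poly (lead_sub x k)) \<le> 1) \<and>
     (\<forall>k\<in>{1..n-1}. \<forall>t. \<not> (eigenvalue (lead_sub x k) t \<and> eigenvalue (lead_sub x (k+1)) t))"

end

theory Submission
  imports Defs
begin

text \<open>Conjugating x_{m+1} by diag(g_m, 1) turns it into an arrowhead matrix with diagonal
  \<Lambda>_m, last column c_m, last row b_m^T and corner \<delta>_{m+1}. Evaluating the characteristic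
  polynomial of an arrowhead matrix at a diagonal entry \<mu>_i kills every term of the Leibniz
  expansion except the one of the transposition (i, m+1), which gives
  P_{m+1}(\<mu>_i) = - b_i c_i \<Prod>_{j\<noteq>i} (\<mu>_i - \<mu>_j) = - b_i c_i P_m'(\<mu>_i).
  Distinctness of the \<mu>_i makes P_m'(\<mu>_i) nonzero, and (G2) makes P_{m+1}(\<mu>_i) nonzero.\<close>

lemma arrowhead_nonzero_perm_eq_transpose:
  fixes A :: "'a :: zero mat"
  assumes p: "p permutes {0..<Suc m}" and i: "i < m"
    and off: "\<And>k j. k < m \<Longrightarrow> j < m \<Longrightarrow> k \<noteq> j \<Longrightarrow> A $$ (k,j) = 0"
    and ii: "A $$ (i,i) = 0"
    and nz: "\<And>k. k < Suc m \<Longrightarrow> A $$ (k, p k) \<noteq> 0"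
  shows "p = Transposition.transpose i m"
proof -
  have rng: "p k < Suc m" if "k < Suc m" for k
    using p that by (metis atLeastLessThan_iff permutes_in_image zero_le)
  have fixed_or_m: "p k = k \<or> p k = m" if "k < m" for k
    using rng[of k] nz[of k] off[of k "p k"] that by (cases "p k = k") (auto simp: less_Suc_eq)
  have pi: "p i = m"
    using fixed_or_m[OF i] nz[of i] ii i by auto
  have pk: "p k = k" if "k < m" "k \<noteq> i" for k
    using fixed_or_m[OF that(1)] pi that permutes_inj[OF p] by (metis injD)
  have pm: "p m = i"
  proof (rule ccontr)
    assume "p m \<noteq> i"
    moreover have "p m \<noteq> m" using pi i permutes_inj[OF p] by (metis injD less_irrefl)
    ultimately have "p (p m) = p m" using pk rng[of m] by auto
    then show False using \<open>p m \<noteq> m\<close> permutes_inj[OF p] by (metis injD)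
  qed
  show ?thesis
  proof
    fix k
    show "p k = Transposition.transpose i m k"
    proof (cases "k < Suc m")
      case True
      then show ?thesis using pi pm pk i
        by (cases "k = i"; cases "k = m"; auto simp: transpose_def)
    next
      case False
      then show ?thesis using p i by (auto simp: permutes_def transpose_def)
    qed
  qed
qed

lemma det_arrowhead_zero_diag:
  fixes A :: "'a :: comm_ring_1 mat"
  assumes A: "A \<in> carrier_mat (Suc m) (Suc m)" and i: "i < m"
    and off: "\<And>k j. k < m \<Longrightarrow> j < m \<Longrightarrow> k \<noteq> j \<Longrightarrow> A $$ (k,j) = 0"
    and ii: "A $$ (i,i) = 0"
  shows "det A = - (A $$ (i,m) * A $$ (m,i) * (\<Prod>j\<in>{0..<m}-{i}. A $$ (j,j)))"
proof -
  define s where "s = Transposition.transpose i m"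
  define P where "P = {p. p permutes {0..<Suc m}}"
  define f where "f = (\<lambda>p. signof p * (\<Prod>k = 0..<Suc m. A $$ (k, p k)))"
  have sP: "s \<in> P" unfolding s_def P_def using i by (auto intro: permutes_swap_id)
  have vanish: "f p = 0" if p: "p \<in> P" "p \<noteq> s" for p
  proof -
    obtain k where "k < Suc m" "A $$ (k, p k) = 0"
      using p arrowhead_nonzero_perm_eq_transpose[OF _ i off ii, of p]
      unfolding P_def s_def by auto
    then have "(\<Prod>k = 0..<Suc m. A $$ (k, p k)) = 0"
      by (intro prod_zero) (auto intro!: bexI[of _ k])
    then show ?thesis unfolding f_def by simp
  qed
  have "det A = sum f P" unfolding det_def'[OF A] f_def P_def ..
  also have "\<dots> = f s + sum f (P - {s})"
    using sP by (intro sum.remove) (auto simp: P_def intro: finite_permutations)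
  also have "sum f (P - {s}) = 0" using vanish by (intro sum.neutral) auto
  also have "signof s = (-1 :: 'a)" unfolding s_def using i by (simp add: sign_swap_id)
  hence "f s = - (\<Prod>k = 0..<Suc m. A $$ (k, s k))" unfolding f_def by simp
  also have "{0..<Suc m} = insert m (insert i ({0..<m}-{i}))" using i by auto
  also have "(\<Prod>k \<in> insert m (insert i ({0..<m}-{i})). A $$ (k, s k))
      = A $$ (m, i) * (A $$ (i, m) * (\<Prod>k \<in> {0..<m}-{i}. A $$ (k, k)))"
    using i by (subst prod.insert, simp, simp, subst prod.insert, simp, simp,
       auto simp: s_def transpose_def intro!: prod.cong)
  finally show ?thesis by (simp add: ac_simps)
qed

lemma poly_char_poly_arrowhead:
  fixes \<mu> :: "nat \<Rightarrow> 'a :: field"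
  assumes c: "c \<in> carrier_mat m 1" and r: "r \<in> carrier_mat 1 m" and d: "d \<in> carrier_mat 1 1"
    and i: "i < m"
  shows "poly (char_poly (four_block_mat (mat_diag m \<mu>) c r d)) (\<mu> i)
    = - (c $$ (i,0) * r $$ (0,i) * (\<Prod>j\<in>{0..<m}-{i}. \<mu> i - \<mu> j))"
proof -
  define M where "M = four_block_mat (mat_diag m \<mu>) c r d"
  define A where "A = - char_matrix M (\<mu> i)"
  have M: "M \<in> carrier_mat (Suc m) (Suc m)"
    unfolding M_def using four_block_carrier_mat[OF mat_diag_dim d] by simp
  have A: "A \<in> carrier_mat (Suc m) (Suc m)" unfolding A_def using M by auto
  have Aij: "A $$ (k, j) = (if k = j then \<mu> i else 0) - M $$ (k, j)"
    if "k < Suc m" "j < Suc m" for k j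
    unfolding A_def char_matrix_def using that M by auto
  have M_diag: "M $$ (k, j) = (if k = j then \<mu> k else 0)" if "k < m" "j < m" for k j
    unfolding M_def using that c r d by (auto simp: mat_diag_def)
  have "poly (char_poly M) (\<mu> i) = det A" unfolding A_def by (rule char_poly_matrix[OF M])
  also have "\<dots> = - (A $$ (i,m) * A $$ (m,i) * (\<Prod>j\<in>{0..<m}-{i}. A $$ (j,j)))"
    using i by (intro det_arrowhead_zero_diag[OF A i]) (auto simp: Aij M_diag)
  also have "(\<Prod>j\<in>{0..<m}-{i}. A $$ (j,j)) = (\<Prod>j\<in>{0..<m}-{i}. \<mu> i - \<mu> j)"
    by (intro prod.cong) (auto simp: Aij M_diag)
  also have "A $$ (i,m) = - c $$ (i,0)" using i c r d by (simp add: Aij M_def mat_diag_def)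
  also have "A $$ (m,i) = - r $$ (0,i)" using i c r d by (simp add: Aij M_def mat_diag_def)
  finally show ?thesis unfolding M_def by simp
qed

lemma char_poly_mat_diag:
  "char_poly (mat_diag m (\<mu> :: nat \<Rightarrow> 'a :: comm_ring_1)) = (\<Prod>j\<in>{0..<m}. [:- \<mu> j, 1:])"
proof -
  have "char_poly (mat_diag m \<mu>) = (\<Prod> a \<leftarrow> diag_mat (mat_diag m \<mu>). [:- a, 1:])"
    by (rule char_poly_upper_triangular[of _ m]) (auto simp: upper_triangular_def mat_diag_def)
  also have "diag_mat (mat_diag m \<mu>) = map \<mu> [0..<m]"
    by (auto simp: diag_mat_def mat_diag_def intro: nth_equalityI)
  finally show ?thesis by (simp add: prod.distinct_set_conv_list[symmetric] o_def)
qed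

lemma poly_pderiv_prod_linear_at_root:
  fixes \<mu> :: "nat \<Rightarrow> 'a :: idom"
  assumes i: "i < m"
  shows "poly (pderiv (\<Prod>j\<in>{0..<m}. [:- \<mu> j, 1:])) (\<mu> i) = (\<Prod>j\<in>{0..<m}-{i}. \<mu> i - \<mu> j)"
proof -
  define h where "h = (\<lambda>a. \<Prod>j\<in>{0..<m}-{a}. poly [:- \<mu> j, 1:] (\<mu> i))"
  have "pderiv [:- a, 1:] = 1" for a :: 'a by (simp add: pderiv_pCons)
  then have "poly (pderiv (\<Prod>j\<in>{0..<m}. [:- \<mu> j, 1:])) (\<mu> i) = sum h {0..<m}"
    unfolding pderiv_prod h_def by (simp add: poly_sum poly_prod)
  also have "\<dots> = h i + sum h ({0..<m} - {i})" using i by (intro sum.remove) auto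
  also have "sum h ({0..<m} - {i}) = 0"
    unfolding h_def using i by (intro sum.neutral ballI prod_zero) (auto intro!: bexI[of _ i])
  finally show ?thesis by (simp add: h_def)
qed

lemma mat_diag_cong: "(\<And>i. i < m \<Longrightarrow> f i = g i) \<Longrightarrow> mat_diag m f = mat_diag m g"
  unfolding mat_diag_def by (intro eq_matI) auto

lemma uminus_mat_diag: "- mat_diag m (f :: nat \<Rightarrow> 'a :: ring_1) = mat_diag m (\<lambda>i. - f i)"
  unfolding mat_diag_def by (intro eq_matI) auto

lemma invertible_mat_diag:
  fixes f :: "nat \<Rightarrow> 'a :: field"
  assumes "\<And>i. i < m \<Longrightarrow> f i \<noteq> 0"
  shows "invertible_mat (mat_diag m f)"
proof -
  have "mat_diag m f * mat_diag m (\<lambda>i. inverse (f i)) = 1\<^sub>m m"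
       "mat_diag m (\<lambda>i. inverse (f i)) * mat_diag m f = 1\<^sub>m m"
    using assms by (auto simp flip: mat_diag_one intro!: mat_diag_cong)
  then show ?thesis unfolding invertible_mat_def inverts_mat_def
    by (auto simp: square_mat.simps mat_diag_def)
qed

lemma mult_conj_cancel:
  fixes B :: "'a :: semiring_1 mat"
  assumes B: "B \<in> carrier_mat n n" and P: "P \<in> carrier_mat n n" and Q: "Q \<in> carrier_mat n n"
    and QP: "Q * P = 1\<^sub>m n"
  shows "Q * (P * B * Q) * P = B"
proof -
  have "Q * (P * B * Q) * P = (Q * P) * B * (Q * P)"
    using B P Q by (simp add: assoc_mult_mat[of _ n n _ n _ n])
  also have "\<dots> = B" using B QP by simp
  finally show ?thesis .
qed

lemma char_poly_conj:
  fixes X :: "'a :: comm_ring_1 mat"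
  assumes X: "X \<in> carrier_mat n n" and P: "P \<in> carrier_mat n n" and Q: "Q \<in> carrier_mat n n"
    and PQ: "P * Q = 1\<^sub>m n" and QP: "Q * P = 1\<^sub>m n"
  shows "char_poly (Q * X * P) = char_poly X"
proof -
  have "similar_mat X (Q * X * P)"
    using X P Q PQ QP mult_conj_cancel[OF X Q P PQ]
    by (intro similar_matI[of X _ P Q n]) auto
  then show ?thesis by (simp add: char_poly_similar)
qed

lemma lead_sub_Suc_four_block:
  "lead_sub x (Suc m) = four_block_mat (lead_sub x m)
     (Matrix.mat m 1 (\<lambda>(i,_). x $$ (i, m))) (Matrix.mat 1 m (\<lambda>(_,j). x $$ (m, j)))
     (Matrix.mat 1 1 (\<lambda>_. x $$ (m, m)))"
  unfolding lead_sub_def by (intro eq_matI) (auto simp: less_Suc_eq)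

lemma four_block_diag_mult:
  fixes g :: "'a :: semiring_1 mat"
  assumes "g \<in> carrier_mat m m" "h \<in> carrier_mat m m"
  shows "four_block_mat g (0\<^sub>m m k) (0\<^sub>m k m) (1\<^sub>m k) * four_block_mat h (0\<^sub>m m k) (0\<^sub>m k m) (1\<^sub>m k)
    = four_block_mat (g * h) (0\<^sub>m m k) (0\<^sub>m k m) (1\<^sub>m k)"
  using assms by (subst mult_four_block_mat[of _ m m _ k _ k _ _ m _ k]) auto

lemma four_block_diag_conj:
  fixes A :: "'a :: semiring_1 mat"
  assumes "A \<in> carrier_mat m m" "U \<in> carrier_mat m k" "V \<in> carrier_mat k m" "D \<in> carrier_mat k k"
    and "g \<in> carrier_mat m m" "h \<in> carrier_mat m m"
  shows "four_block_mat h (0\<^sub>m m k) (0\<^sub>m k m) (1\<^sub>m k) * four_block_mat A U V D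
      * four_block_mat g (0\<^sub>m m k) (0\<^sub>m k m) (1\<^sub>m k)
    = four_block_mat (h * A * g) (h * U) (V * g) D"
  using assms
  by (subst mult_four_block_mat[of _ m m _ k _ k _ _ m _ k], simp_all,
      subst mult_four_block_mat[of _ m m _ k _ k _ _ m _ k], auto)

lemma poly_pderiv_char_poly_diagonalized:
  fixes \<mu> :: "nat \<Rightarrow> 'a :: idom"
  assumes g: "g \<in> carrier_mat m m" "g_inv \<in> carrier_mat m m"
    and g_inv: "g * g_inv = 1\<^sub>m m" "g_inv * g = 1\<^sub>m m"
    and i: "i < m"
  shows "poly (pderiv (char_poly (g * mat_diag m \<mu> * g_inv))) (\<mu> i)
    = (\<Prod>j\<in>{0..<m}-{i}. \<mu> i - \<mu> j)"
proof -
  have "char_poly (g * mat_diag m \<mu> * g_inv) = char_poly (mat_diag m \<mu>)"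
    using char_poly_conj[OF mat_diag_dim g(2) g(1) g_inv(2,1)] .
  then show ?thesis by (simp add: char_poly_mat_diag poly_pderiv_prod_linear_at_root[OF i])
qed

lemma poly_char_poly_lead_sub_Suc_at_eigenvalue:
  fixes x :: "'a :: field mat"
  assumes g: "g \<in> carrier_mat m m" "g_inv \<in> carrier_mat m m"
    and g_inv: "g * g_inv = 1\<^sub>m m" "g_inv * g = 1\<^sub>m m"
    and g_diag: "lead_sub x m = g * mat_diag m \<mu> * g_inv"
    and i: "i < m"
  defines "M \<equiv> four_block_mat g_inv (0\<^sub>m m 1) (0\<^sub>m 1 m) (1\<^sub>m 1) * lead_sub x (m + 1)
                 * four_block_mat g (0\<^sub>m m 1) (0\<^sub>m 1 m) (1\<^sub>m 1)"
  shows "poly (char_poly (lead_sub x (m + 1))) (\<mu> i)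
    = - (M $$ (i, m) * M $$ (m, i) * (\<Prod>j\<in>{0..<m}-{i}. \<mu> i - \<mu> j))"
proof -
  define U where "U = Matrix.mat m 1 (\<lambda>(i,_). x $$ (i, m))"
  define V where "V = Matrix.mat 1 m (\<lambda>(_,j). x $$ (m, j))"
  define D where "D = Matrix.mat 1 1 (\<lambda>_. x $$ (m, m))"
  have Xm: "lead_sub x m \<in> carrier_mat m m" unfolding lead_sub_def by auto
  have blocks: "U \<in> carrier_mat m 1" "V \<in> carrier_mat 1 m" "D \<in> carrier_mat 1 1"
    unfolding U_def V_def D_def by auto
  have "g_inv * lead_sub x m * g = mat_diag m \<mu>"
    unfolding g_diag using mult_conj_cancel[OF mat_diag_dim g g_inv(2)] .
  then have M: "M = four_block_mat (mat_diag m \<mu>) (g_inv * U) (V * g) D"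
    unfolding M_def Suc_eq_plus1[symmetric] lead_sub_Suc_four_block
    by (fold U_def V_def D_def, subst four_block_diag_conj[OF Xm blocks g]) simp
  have "char_poly (lead_sub x (m + 1)) = char_poly M"
    unfolding M_def using g g_inv
    by (intro char_poly_conj[symmetric]) (auto simp: lead_sub_def four_block_diag_mult)
  then have "poly (char_poly (lead_sub x (m + 1))) (\<mu> i)
      = - ((g_inv * U) $$ (i, 0) * (V * g) $$ (0, i) * (\<Prod>j\<in>{0..<m}-{i}. \<mu> i - \<mu> j))"
    using i blocks g by (simp add: M poly_char_poly_arrowhead)
  moreover have "M $$ (i, m) = (g_inv * U) $$ (i, 0)" "M $$ (m, i) = (V * g) $$ (0, i)"
    using i blocks g by (simp_all add: M mat_diag_def)
  ultimately show ?thesis by simp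
qed

lemma generic_not_root_next:
  assumes "generic n x" "1 \<le> m" "m \<le> n - 1" "eigenvalue (lead_sub x m) t"
  shows "poly (char_poly (lead_sub x (m + 1))) t \<noteq> 0"
proof
  assume "poly (char_poly (lead_sub x (m + 1))) t = 0"
  then have "eigenvalue (lead_sub x (m + 1)) t"
    using eigenvalue_root_char_poly[of "lead_sub x (m + 1)" "m + 1"] by (simp add: lead_sub_def)
  with assms show False unfolding generic_def by auto
qed

theorem mainTheorem1:
  fixes n m :: nat and x g g_inv :: "complex mat" and \<mu> :: "nat \<Rightarrow> complex"
  assumes n2: "n \<ge> 2"
    and x: "x \<in> carrier_mat n n"
    and gen: "generic n x"
    and m: "1 \<le> m" "m \<le> n - 1"
    and mu_eig: "\<forall>i<m. eigenvalue (lead_sub x m) (\<mu> i)"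
    and mu_inj: "inj_on \<mu> {..<m}"
    and g: "g \<in> carrier_mat m m" "g_inv \<in> carrier_mat m m"
    and g_inv: "g * g_inv = 1\<^sub>m m" "g_inv * g = 1\<^sub>m m"
    and g_diag: "lead_sub x m = g * mat_diag m \<mu> * g_inv"
    and g_last: "\<forall>j<m. g $$ (m - 1, j) = 1"
  defines "b \<equiv> (\<lambda>i. (four_block_mat g_inv (0\<^sub>m m 1) (0\<^sub>m 1 m) (1\<^sub>m 1) * lead_sub x (m + 1)
                 * four_block_mat g (0\<^sub>m m 1) (0\<^sub>m 1 m) (1\<^sub>m 1)) $$ (m, i))"
    and "c \<equiv> (\<lambda>i. (four_block_mat g_inv (0\<^sub>m m 1) (0\<^sub>m 1 m) (1\<^sub>m 1) * lead_sub x (m + 1)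
                 * four_block_mat g (0\<^sub>m m 1) (0\<^sub>m 1 m) (1\<^sub>m 1)) $$ (i, m))"
  shows "invertible_mat (mat_diag m (\<lambda>i. poly (pderiv (char_poly (lead_sub x m))) (\<mu> i)))
       \<and> mat_diag m b * mat_diag m c =
           - (mat_diag m (\<lambda>i. poly (char_poly (lead_sub x (m + 1))) (\<mu> i))
              * mat_diag m (\<lambda>i. inverse (poly (pderiv (char_poly (lead_sub x m))) (\<mu> i))))
       \<and> invertible_mat (mat_diag m b * mat_diag m c)"
proof -
  let ?X = "lead_sub x (m + 1)" and ?Xm = "lead_sub x m"
  define q where "q i = (\<Prod>j\<in>{0..<m}-{i}. \<mu> i - \<mu> j)" for i
  have q_nz: "q i \<noteq> 0" if "i < m" for i
    unfolding q_def using that mu_inj by (auto simp: inj_on_def)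
  have P_deriv: "poly (pderiv (char_poly ?Xm)) (\<mu> i) = q i" if "i < m" for i
    unfolding g_diag q_def by (rule poly_pderiv_char_poly_diagonalized[OF g g_inv that])
  have P_next: "poly (char_poly ?X) (\<mu> i) = - (c i * b i * q i)" if "i < m" for i
    unfolding b_def c_def q_def
    by (rule poly_char_poly_lead_sub_Suc_at_eigenvalue[OF g g_inv g_diag that])
  have P_next_nz: "poly (char_poly ?X) (\<mu> i) \<noteq> 0" if "i < m" for i
    using generic_not_root_next[OF gen m] mu_eig that by simp
  show ?thesis
    unfolding mat_diag_diag uminus_mat_diag
  proof (intro conjI invertible_mat_diag mat_diag_cong)
    fix i assume i: "i < m"
    show "poly (pderiv (char_poly ?Xm)) (\<mu> i) \<noteq> 0" using P_deriv q_nz i by simp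
    show "b i * c i = - (poly (char_poly ?X) (\<mu> i) * inverse (poly (pderiv (char_poly ?Xm)) (\<mu> i)))"
      unfolding P_next[OF i] P_deriv[OF i] using q_nz[OF i] by (simp add: field_simps)
    show "b i * c i \<noteq> 0" using P_next P_next_nz i by fastforce
  qed
qed

end
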